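(* Let $S$ be a minimal zero-sum sequence over $\mathbb{Z}$ with $|S|$ finite and $|S|>1$. Suppose $S=S^+\cdot S^-$ where \[S^+=\prod_{i=1}^n a_i^{[x_i]},\qquad S^-=\prod_{j=1}^m (-b_j)^{[y_j]},\] with positive integers $a_1\le \dots\le a_n$, $b_1\le\dots\le b_m$, and positive integers $x_i$ ($i\in[1,n]$), $y_j$ ($j\in[1,m]$). Then \[|S^+|\le \left\lfloor -S^-_{\rm av}\right\rfloor=\left\lfloor \frac{\sum_{j=1}^m b_j y_j}{\sum_{j=1}^m y_j}\right\rfloor \quad\text{and}\quad |S^-|\le \left\lfloor S^+_{\rm av}\right\rfloor=\left\lfloor \frac{\sum_{i=1}^n a_i x_i}{\sum_{i=1}^n x_i}\right\rfloor.\]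
   Context: A sequence over a subset $G_0$ of an abelian group is a finite unordered sequence (multiset) of elements of $G_0$; the product $R\cdot T$ denotes concatenation, and $R$, $T$ are then called subsequences of $R\cdot T$. For $g$ and an integer $d\ge 0$, $g^{[d]}$ denotes the sequence consisting of $d$ copies of $g$. For $S=s_1\cdot\ldots\cdot s_t$: $|S|=t$ is its length, $\sigma(S)=s_1+\dots+s_t$ its sum, and $S_{\rm av}=\sigma(S)/|S|$ its average. $S$ is a zero-sum sequence if $\sigma(S)=0$, and a minimal zero-sum sequence if it is a nontrivial zero-sum sequence containing no proper nontrivial zero-sum subsequence. $[x,y]=\{i\in\mathbb{Z}: x\le i\le y\}$. *)

theory Defs
  imports Complex_Main "HOL-Library.Multiset"
begin

text \<open>Sequences over a subset of an abelian group are modelled as finite multisets.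
  The sum of a sequence is sum_mset, its length is size.\<close>

definition zero_sum_seq :: "'a::comm_monoid_add multiset \<Rightarrow> bool" where
  "zero_sum_seq S \<longleftrightarrow> sum_mset S = 0"

definition minimal_zero_sum_seq :: "'a::comm_monoid_add multiset \<Rightarrow> bool" where
  "minimal_zero_sum_seq S \<longleftrightarrow>
     S \<noteq> {#} \<and> sum_mset S = 0 \<and>
     (\<forall>T. T \<subseteq># S \<and> T \<noteq> {#} \<and> sum_mset T = 0 \<longrightarrow> T = S)"

definition seq_av :: "int multiset \<Rightarrow> real" where
  "seq_av S = real_of_int (sum_mset S) / real (size S)"

end

theory Submission
  imports Defs
begin

text \<open>Put \<open>\<sigma> = \<sigma>(S\<^sup>+) = -\<sigma>(S\<^sup>-)\<close>, list the elements of \<open>S\<^sup>+\<close> and of \<open>-S\<^sup>-\<close>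
  in some order and let \<open>p\<^sub>i\<close>, \<open>q\<^sub>j\<close> be their prefix sums for \<open>i < |S\<^sup>+|\<close>, \<open>j < |S\<^sup>-|\<close>.
  The residues \<open>(p\<^sub>i - q\<^sub>j) mod \<sigma>\<close> are pairwise distinct: if two of them coincide, then a
  cyclic segment of each list has the same sum in \<open>[0, \<sigma>)\<close>, and the two segments, the second
  one negated, form a zero-sum subsequence of \<open>S\<close>. It is proper because a cyclic segment
  is never the whole list, so by minimality it is empty, i.e. the two index pairs agree.
  Hence \<open>|S\<^sup>+| |S\<^sup>-| \<le> \<sigma>\<close>, and dividing by \<open>|S\<^sup>-|\<close> resp. \<open>|S\<^sup>+|\<close> gives both bounds.\<close>

lemma sum_mset_pos:
  fixes M :: "'a::ordered_cancel_comm_monoid_add multiset"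
  assumes "\<forall>x\<in>#M. 0 < x" and "M \<noteq> {#}"
  shows "0 < sum_mset M"
  using assms
proof (induction M)
  case (add x M)
  then show ?case by (cases "M = {#}") (simp_all add: add_pos_pos)
qed simp

lemma sum_mset_image_uminus:
  "sum_mset (image_mset uminus M) = - sum_mset (M :: 'a::ab_group_add multiset)"
  by (induction M) simp_all

lemma sum_list_take_less:
  fixes xs :: "'a::ordered_cancel_comm_monoid_add list"
  assumes "\<forall>x\<in>set xs. 0 < x" and "k < length xs"
  shows "sum_list (take k xs) < sum_list xs"
proof -
  have "\<forall>x\<in>#mset (drop k xs). 0 < x"
    using assms(1) by (auto dest: in_set_dropD)
  moreover have "mset (drop k xs) \<noteq> {#}"
    using assms(2) by simp
  ultimately have "0 < sum_list (drop k xs)"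
    by (metis sum_mset_sum_list sum_mset_pos)
  moreover have "sum_list xs = sum_list (take k xs) + sum_list (drop k xs)"
    by (metis append_take_drop_id sum_list_append)
  ultimately show ?thesis
    using add_strict_left_mono by fastforce
qed

lemma sum_list_drop_take:
  fixes xs :: "'a::ab_group_add list"
  assumes "i \<le> j"
  shows "sum_list (drop i (take j xs)) = sum_list (take j xs) - sum_list (take i xs)"
proof -
  have "take j xs = take i xs @ drop i (take j xs)"
    using assms by (metis append_take_drop_id min.absorb1 take_take)
  then have "sum_list (take j xs) = sum_list (take i xs) + sum_list (drop i (take j xs))"
    by (metis sum_list_append)
  then show ?thesis by (simp add: algebra_simps)
qed

lemma mset_drop_take_subseteq: "mset (drop i (take j xs)) \<subseteq># mset xs"
proof -
  have "mset (drop i (take j xs)) \<subseteq># mset (take j xs)"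
    by (metis append_take_drop_id mset_append mset_subset_eq_add_right)
  also have "\<dots> \<subseteq># mset xs"
    by (metis append_take_drop_id mset_append mset_subset_eq_add_left)
  finally show ?thesis .
qed

lemma proper_submset_with_sum_prefix_sum_diff_mod:
  fixes xs :: "int list"
  assumes pos: "\<forall>x\<in>set xs. 0 < x" and i: "i < length xs" and j: "j < length xs"
  obtains T where "T \<subseteq># mset xs" and "T \<noteq> mset xs"
    and "sum_mset T = (sum_list (take i xs) - sum_list (take j xs)) mod sum_list xs"
    and "T = {#} \<Longrightarrow> i = j"
proof -
  let ?\<sigma> = "sum_list xs" and ?p = "\<lambda>k. sum_list (take k xs)"
  have prefix_nonneg: "0 \<le> ?p k" for k
    using pos by (intro sum_list_nonneg) (meson in_set_takeD less_imp_le)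
  have prefix_less: "?p k < ?\<sigma>" if "k < length xs" for k
    using sum_list_take_less[OF pos that] .
  show ?thesis
  proof (cases "j \<le> i")
    case True
    define T where "T = mset (drop j (take i xs))"
    have sum_T: "sum_mset T = ?p i - ?p j"
      unfolding T_def using True by (simp add: sum_mset_sum_list sum_list_drop_take)
    have "0 \<le> sum_mset T"
      unfolding T_def sum_mset_sum_list using pos
      by (intro sum_list_nonneg) (meson in_set_takeD in_set_dropD less_imp_le)
    then have "sum_mset T = (?p i - ?p j) mod ?\<sigma>"
      using sum_T prefix_less[OF i] prefix_nonneg[of j] by simp
    moreover have "size T = i - j"
      unfolding T_def using i by simp
    moreover have "T \<subseteq># mset xs"
      unfolding T_def by (rule mset_drop_take_subseteq)
    ultimately show ?thesis
      using that[of T] True i by fastforce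
  next
    case False
    text \<open>The cyclic segment from position \<open>j\<close> round to position \<open>i\<close> is the complement
      of the ordinary segment from \<open>i\<close> to \<open>j\<close>.\<close>
    define U where "U = mset (drop i (take j xs))"
    define T where "T = mset xs - U"
    have U_sub: "U \<subseteq># mset xs"
      unfolding U_def by (rule mset_drop_take_subseteq)
    have size_U: "size U = j - i"
      unfolding U_def using j by simp
    have "0 < sum_mset U"
      using False size_U pos
      by (intro sum_mset_pos) (auto simp: U_def dest: in_set_takeD in_set_dropD)
    moreover have sum_U: "sum_mset U = ?p j - ?p i"
      unfolding U_def using False by (simp add: sum_mset_sum_list sum_list_drop_take)
    ultimately have "(?p i - ?p j) mod ?\<sigma> = ?p i - ?p j + ?\<sigma>"
      using prefix_less[OF j] prefix_nonneg[of i]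
      by (subst mod_add_self2[symmetric], intro mod_pos_pos_trivial) linarith+
    also have "\<dots> = sum_mset T"
      using U_sub sum_U by (simp add: T_def sum_mset_diff sum_mset_sum_list)
    finally have "sum_mset T = (?p i - ?p j) mod ?\<sigma>" ..
    moreover have "size T = length xs - (j - i)"
      unfolding T_def using U_sub size_U by (simp add: size_Diff_submset)
    then have "T \<noteq> mset xs" and "T \<noteq> {#}"
      using False j by (auto dest: arg_cong[of _ _ size])
    moreover have "T \<subseteq># mset xs"
      unfolding T_def by simp
    ultimately show ?thesis
      using that by blast
  qed
qed
lemma minimal_zero_sum_seq_zero_sum_submset:
  fixes A B :: "'a::comm_monoid_add multiset"
  assumes minimal: "minimal_zero_sum_seq (A + B)"
    and T: "T \<subseteq># A" and U: "U \<subseteq># B" and zero: "sum_mset T + sum_mset U = 0"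
  shows "T + U = {#} \<or> T = A \<and> U = B"
proof -
  have "T + U \<subseteq># A + B"
    using T U by (rule subset_mset.add_mono)
  then consider "T + U = {#}" | "T + U = A + B"
    using minimal zero unfolding minimal_zero_sum_seq_def by auto
  then show ?thesis
  proof cases
    case 2
    have "T = A"
    proof (rule ccontr)
      assume "T \<noteq> A"
      then have "T + U \<subset># A + B"
        using T U by (intro subset_mset.add_less_le_mono) simp_all
      then show False
        using 2 by simp
    qed
    then show ?thesis
      using 2 by simp
  qed simp
qed

lemma prefix_sum_residues_inj_on:
  fixes as bs :: "int list"
  assumes minimal: "minimal_zero_sum_seq (mset as + image_mset uminus (mset bs))"
    and as_pos: "\<forall>x\<in>set as. 0 < x" and bs_pos: "\<forall>x\<in>set bs. 0 < x"
  shows "inj_on (\<lambda>(i, j). (sum_list (take i as) - sum_list (take j bs)) mod sum_list as)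
    ({..<length as} \<times> {..<length bs})"
proof (rule inj_onI, clarsimp)
  fix i j i' j'
  assume i: "i < length as" "i' < length as" and j: "j < length bs" "j' < length bs"
    and eq: "(sum_list (take i as) - sum_list (take j bs)) mod sum_list as
      = (sum_list (take i' as) - sum_list (take j' bs)) mod sum_list as"
  have "sum_list as - sum_list bs = 0"
    using minimal by (simp add: minimal_zero_sum_seq_def sum_mset_image_uminus sum_mset_sum_list)
  then have \<sigma>: "sum_list bs = sum_list as"
    by simp
  have "(sum_list (take i as) - sum_list (take i' as)) mod sum_list as
      = (sum_list (take j bs) - sum_list (take j' bs)) mod sum_list bs"
    using eq unfolding \<sigma> by (simp add: mod_eq_dvd_iff algebra_simps)
  moreover obtain T where T: "T \<subseteq># mset as" "T \<noteq> mset as"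
    and sum_T: "sum_mset T = (sum_list (take i as) - sum_list (take i' as)) mod sum_list as"
    and T_empty: "T = {#} \<Longrightarrow> i = i'"
    using proper_submset_with_sum_prefix_sum_diff_mod[OF as_pos i] by blast
  moreover obtain U where U: "U \<subseteq># mset bs" "U \<noteq> mset bs"
    and sum_U: "sum_mset U = (sum_list (take j bs) - sum_list (take j' bs)) mod sum_list bs"
    and U_empty: "U = {#} \<Longrightarrow> j = j'"
    using proper_submset_with_sum_prefix_sum_diff_mod[OF bs_pos j] by blast
  ultimately have "sum_mset T + sum_mset (image_mset uminus U) = 0"
    by (simp add: sum_mset_image_uminus)
  moreover have "image_mset uminus U \<subseteq># image_mset uminus (mset bs)"
    using U(1) by (rule image_mset_subseteq_mono)
  ultimately have "T + image_mset uminus U = {#}"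
    using minimal_zero_sum_seq_zero_sum_submset[OF minimal T(1)] T(2) by blast
  then show "i = i' \<and> j = j'"
    using T_empty U_empty by simp
qed

lemma minimal_zero_sum_seq_size_mult_le:
  fixes P N :: "int multiset"
  assumes minimal: "minimal_zero_sum_seq (P + N)"
    and P_pos: "\<forall>x\<in>#P. 0 < x" and N_neg: "\<forall>x\<in>#N. x < 0"
  shows "int (size P * size N) \<le> sum_mset P"
proof (cases "P = {#}")
  case False
  obtain as where as: "mset as = P"
    using ex_mset by blast
  obtain bs where bs: "mset bs = image_mset uminus N"
    using ex_mset by blast
  have N: "image_mset uminus (mset bs) = N"
    unfolding bs by (simp add: multiset.map_comp comp_def)
  have as_pos: "\<forall>x\<in>set as. 0 < x" and bs_pos: "\<forall>x\<in>set bs. 0 < x"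
    using P_pos N_neg as[symmetric] N[symmetric] by auto
  have \<sigma>: "sum_list as = sum_mset P" and "0 < sum_mset P"
    using as sum_mset_pos[OF P_pos False] by (auto simp: sum_mset_sum_list[symmetric])
  let ?f = "\<lambda>(i, j). (sum_list (take i as) - sum_list (take j bs)) mod sum_list as"
  have "inj_on ?f ({..<length as} \<times> {..<length bs})"
    using prefix_sum_residues_inj_on[OF _ as_pos bs_pos] minimal as N by simp
  moreover have "?f ` ({..<length as} \<times> {..<length bs}) \<subseteq> {0..<sum_mset P}"
    using \<open>0 < sum_mset P\<close> \<sigma> by auto
  ultimately have "card ({..<length as} \<times> {..<length bs}) \<le> card {0..<sum_mset P}"
    by (intro card_inj_on_le) simp_all
  moreover have "size P = length as" and "size N = length bs"
    using as N[symmetric] by auto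
  ultimately have "size P * size N \<le> nat (sum_mset P)"
    by (simp add: card_cartesian_product)
  then show ?thesis
    using \<open>0 < sum_mset P\<close> le_nat_iff by simp
qed simp

lemma minimal_zero_sum_seq_signed_parts_nonempty:
  fixes P N :: "int multiset"
  assumes minimal: "minimal_zero_sum_seq (P + N)"
    and P_pos: "\<forall>x\<in>#P. 0 < x" and N_neg: "\<forall>x\<in>#N. x < 0"
  shows "P \<noteq> {#}" and "N \<noteq> {#}"
proof -
  have zero: "sum_mset P = sum_mset (image_mset uminus N)"
    using minimal by (simp add: minimal_zero_sum_seq_def sum_mset_image_uminus)
  have N_pos: "\<forall>x\<in>#image_mset uminus N. 0 < x"
    using N_neg by auto
  have "P + N \<noteq> {#}"
    using minimal by (simp add: minimal_zero_sum_seq_def)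
  then show "P \<noteq> {#}" and "N \<noteq> {#}"
    using zero sum_mset_pos[OF P_pos] sum_mset_pos[OF N_pos] by auto
qed

lemma le_floor_divide_of_mult_le:
  assumes "0 < q" and "int (p * q) \<le> s"
  shows "int p \<le> \<lfloor>real_of_int s / real q\<rfloor>"
proof -
  have "real p * real q \<le> real_of_int s"
    using assms(2) by (metis of_int_le_iff of_int_of_nat_eq of_nat_mult)
  then show ?thesis
    using assms(1) by (simp add: le_floor_iff pos_le_divide_eq)
qed

theorem minimal_zero_sum_seq_size_le_floor_av:
  fixes P N :: "int multiset"
  assumes minimal: "minimal_zero_sum_seq (P + N)"
    and P_pos: "\<forall>x\<in>#P. 0 < x" and N_neg: "\<forall>x\<in>#N. x < 0"
  shows "int (size P) \<le> \<lfloor>- seq_av N\<rfloor>" and "int (size N) \<le> \<lfloor>seq_av P\<rfloor>"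
proof -
  have bound: "int (size P * size N) \<le> sum_mset P"
    using minimal_zero_sum_seq_size_mult_le[OF assms] .
  have "0 < size P" and "0 < size N"
    using minimal_zero_sum_seq_signed_parts_nonempty[OF assms] by (simp_all add: nonempty_has_size)
  moreover have "sum_mset N = - sum_mset P"
    using minimal by (simp add: minimal_zero_sum_seq_def eq_neg_iff_add_eq_0 add.commute)
  then have "- seq_av N = real_of_int (sum_mset P) / real (size N)"
    by (simp add: seq_av_def)
  ultimately show "int (size P) \<le> \<lfloor>- seq_av N\<rfloor>" and "int (size N) \<le> \<lfloor>seq_av P\<rfloor>"
    using bound le_floor_divide_of_mult_le
    by (simp_all add: seq_av_def mult.commute)
qed

lemma set_mset_sum_replicate_mset:
  "set_mset (\<Sum>i\<in>I. replicate_mset (c i) (v i)) \<subseteq> v ` I"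
  by (cases "finite I") (auto simp: set_mset_sum)

lemma sum_mset_sum_replicate_mset:
  "sum_mset (\<Sum>i\<in>I. replicate_mset (c i) (v i)) = (\<Sum>i\<in>I. v i * of_nat (c i) :: 'a::comm_semiring_1)"
  by (induction I rule: infinite_finite_induct) (simp_all add: mult.commute)

lemma seq_av_sum_replicate_mset:
  "seq_av (\<Sum>i\<in>I. replicate_mset (c i) (v i))
    = real_of_int (\<Sum>i\<in>I. v i * int (c i)) / real (\<Sum>i\<in>I. c i)"
  by (simp add: seq_av_def sum_mset_sum_replicate_mset)

theorem theorem1p3:
  fixes S Sp Sm :: "int multiset"
    and n m :: nat and a b :: "nat \<Rightarrow> int" and x y :: "nat \<Rightarrow> nat"
  assumes minimal: "minimal_zero_sum_seq S"
    and len: "size S > 1"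
    and Sp_def: "Sp = (\<Sum>i\<in>{1..n}. replicate_mset (x i) (a i))"
    and Sm_def: "Sm = (\<Sum>j\<in>{1..m}. replicate_mset (y j) (- b j))"
    and decomp: "S = Sp + Sm"
    and a_pos: "\<forall>i\<in>{1..n}. a i > 0"
    and a_mono: "\<forall>i\<in>{1..n}. \<forall>i'\<in>{1..n}. i \<le> i' \<longrightarrow> a i \<le> a i'"
    and b_pos: "\<forall>j\<in>{1..m}. b j > 0"
    and b_mono: "\<forall>j\<in>{1..m}. \<forall>j'\<in>{1..m}. j \<le> j' \<longrightarrow> b j \<le> b j'"
    and x_pos: "\<forall>i\<in>{1..n}. x i > 0"
    and y_pos: "\<forall>j\<in>{1..m}. y j > 0"
  shows "int (size Sp) \<le> \<lfloor>- seq_av Sm\<rfloor>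
         \<and> \<lfloor>- seq_av Sm\<rfloor> = \<lfloor>real_of_int (\<Sum>j\<in>{1..m}. b j * int (y j)) / real (\<Sum>j\<in>{1..m}. y j)\<rfloor>
         \<and> int (size Sm) \<le> \<lfloor>seq_av Sp\<rfloor>
         \<and> \<lfloor>seq_av Sp\<rfloor> = \<lfloor>real_of_int (\<Sum>i\<in>{1..n}. a i * int (x i)) / real (\<Sum>i\<in>{1..n}. x i)\<rfloor>"
proof -
  have "\<forall>z\<in>#Sp. 0 < z"
    using set_mset_sum_replicate_mset[of x a "{1..n}"] a_pos unfolding Sp_def by fastforce
  moreover have "\<forall>z\<in>#Sm. z < 0"
    using set_mset_sum_replicate_mset[of y "\<lambda>j. - b j" "{1..m}"] b_pos unfolding Sm_def by fastforce
  ultimately have "int (size Sp) \<le> \<lfloor>- seq_av Sm\<rfloor>" and "int (size Sm) \<le> \<lfloor>seq_av Sp\<rfloor>"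
    using minimal_zero_sum_seq_size_le_floor_av minimal unfolding decomp by blast+
  moreover have "- seq_av Sm = real_of_int (\<Sum>j\<in>{1..m}. b j * int (y j)) / real (\<Sum>j\<in>{1..m}. y j)"
    unfolding Sm_def seq_av_sum_replicate_mset by (simp add: sum_negf)
  moreover have "seq_av Sp = real_of_int (\<Sum>i\<in>{1..n}. a i * int (x i)) / real (\<Sum>i\<in>{1..n}. x i)"
    unfolding Sp_def by (rule seq_av_sum_replicate_mset)
  ultimately show ?thesis
    by simp
qed

end
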